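(* Let $N\ge 1$, $Z=\{1,\dots,N\}$, and let $W=(w_{ij})$ be a symmetric nonnegative weight matrix with positive degrees $d_i=\sum_jw_{ij}$, $D=\mathrm{diag}(d_i)$, $L=D^{-p}(D-W)D^{-p}$ for some $p\in\mathbb R$, and for $\tau^2,\alpha>0$ let $C_\tau=\tau^{2\alpha}(L+\tau^2I)^{-\alpha}=(c_{ij})$ with columns $\mathbf c_j=C_\tau\mathbf e_j$. Let $Z'\subseteq Z$ with $|Z'|=J$, $y:Z'\to\{-1,+1\}$, and let $\pi:Z'\to\{1,\dots,J\}$ be a bijection. Let $C'_\tau\in\mathbb R^{J\times J}$ be defined by $(C'_\tau)_{\pi(i),\pi(j)}=c_{ij}$ for $i,j\in Z'$ (i.e. $C_\tau$ with rows and columns outside $Z'$ removed). Let $\psi$ be a continuously differentiable, symmetric, strictly log-concave probability density with full support on $\mathbb R$ and CDF $\Psi$, let $F_j(s)=y(j)\psi(sy(j))/\Psi(sy(j))$ for $j\in Z'$, and let $\mathsf J(\mathbf u)=\frac12\langle\mathbf u,C_\tau^{-1}\mathbf u\rangle-\sum_{j\in Z'}\log\Psi(u_jy(j))$ on $\mathbb R^N$. Then: (i) finding the minimizer $\mathbf u^\ast\in\mathbb R^N$ of $\mathsf J$ is equivalent to finding $\mathbf b^\ast\in\mathbb R^J$ solving $(C'_\tau)^{-1}\mathbf b^\ast=F'(\mathbf b^\ast)$, where $F'(\mathbf v)=(f_1(v_1),\dots,f_J(v_J))^T$ with $f_k(v_k)=F_{\pi^{-1}(k)}(v_k)$; (ii)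 $\mathbf b^\ast=\arg\min_{\mathbf v\in\mathbb R^J}\mathsf J'(\mathbf v)$, where $\mathsf J'(\mathbf b)=\frac12\langle\mathbf b,(C'_\tau)^{-1}\mathbf b\rangle-\sum_{j=1}^J\log\Psi\big(b_jy(\pi^{-1}(j))\big)$; (iii) $\mathbf u^\ast=\sum_{j\in Z'}\big((C'_\tau)^{-1}\mathbf b^\ast\big)_{\pi(j)}\mathbf c_j$ and $b^\ast_k=u^\ast_{\pi^{-1}(k)}$ for $k=1,\dots,J$.
   Context: $\mathbf e_j$ is the $j$-th standard basis vector of $\mathbb R^N$; $\langle\cdot,\cdot\rangle$ is the Euclidean inner product. *)

theory Defs
  imports "HOL-Analysis.Analysis"
begin

definition strictly_concave_on :: "'a::real_vector set \<Rightarrow> ('a \<Rightarrow> real) \<Rightarrow> bool" where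
  "strictly_concave_on S f \<longleftrightarrow> convex S \<and>
     (\<forall>x\<in>S. \<forall>y\<in>S. \<forall>t::real. x \<noteq> y \<and> 0 < t \<and> t < 1 \<longrightarrow>
        f ((1 - t) *\<^sub>R x + t *\<^sub>R y) > (1 - t) * f x + t * f y)"

definition diag_mat :: "('n::finite \<Rightarrow> real) \<Rightarrow> real^'n^'n" where
  "diag_mat f = (\<chi> i j. if i = j then f i else 0)"

text \<open>Real power of a symmetric matrix, defined through its spectral decomposition
  A = U diag(lambda) U^T with U orthogonal:  A^r = U diag(lambda^r) U^T.
  (Used only for symmetric positive definite A, where it is well defined.)\<close>
definition mat_powr :: "real^'n^'n \<Rightarrow> real \<Rightarrow> real^'n::finite^'n" where
  "mat_powr A r = (SOME M. \<exists>U lam. orthogonal_matrix U \<and>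
       A = U ** diag_mat lam ** transpose U \<and>
       M = U ** diag_mat (\<lambda>i. lam i powr r) ** transpose U)"

end

theory Submission
  imports Defs
begin

(* C is symmetric positive definite: L is a diagonal congruence transform of the graph
   Laplacian D - W, whose quadratic form 1/2 sum_ij w_ij (x_i - x_j)^2 is nonnegative, so
   L + tau2 I is positive definite, and so are all its real powers (spectral theorem).
   Log-concavity of psi passes to Psi (the ratio psi/Psi is nonincreasing), so J is a positive
   definite quadratic form minus concave functions of single coordinates. Hence J is strictly
   convex, and u minimises it iff C^(-1) u = a, where a vanishes off Z' and a_j = F_j(u_j) on Z'.
   Then u = C a = sum_j a_j c_j, and reading this equation on Z' gives b = C' F'(b) for the
   restriction b of u, i.e. (C')^(-1) b = F'(b): the stationarity equation of the strictly
   convex J'. *)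

section \<open>Symmetric positive definite matrices\<close>

definition positive_definite :: "real^'n^'n \<Rightarrow> bool" where
  "positive_definite A \<longleftrightarrow> (\<forall>x. x \<noteq> 0 \<longrightarrow> 0 < x \<bullet> (A *v x))"

lemma inner_matrix_vector_transpose:
  fixes A :: "real^'n^'m"
  shows "x \<bullet> (A *v y) = (transpose A *v x) \<bullet> y"
  by (metis dot_lmul_matrix transpose_matrix_vector)

lemma inner_symmetric_matrix:
  fixes A :: "real^'n^'n"
  assumes "transpose A = A"
  shows "x \<bullet> (A *v y) = y \<bullet> (A *v x)"
  by (metis assms inner_commute inner_matrix_vector_transpose)

lemma quadratic_form_add:
  fixes A :: "real^'n^'n"
  assumes "transpose A = A"
  shows "(u + w) \<bullet> (A *v (u + w)) = u \<bullet> (A *v u) + 2 * (w \<bullet> (A *v u)) + w \<bullet> (A *v w)"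
proof -
  have "u \<bullet> (A *v w) = w \<bullet> (A *v u)" by (rule inner_symmetric_matrix[OF assms])
  thus ?thesis by (simp add: matrix_vector_right_distrib inner_add_left inner_add_right)
qed

lemma quadratic_form_congruence:
  fixes A U :: "real^'n^'n"
  shows "x \<bullet> ((transpose U ** A ** U) *v x) = (U *v x) \<bullet> (A *v (U *v x))"
proof -
  have "x \<bullet> ((transpose U ** A ** U) *v x) = x \<bullet> (transpose U *v (A *v (U *v x)))"
    by (simp add: matrix_vector_mul_assoc matrix_mul_assoc)
  also have "\<dots> = (U *v x) \<bullet> (A *v (U *v x))"
    by (simp add: inner_matrix_vector_transpose[of x "transpose U"] del: transpose_matrix_vector)
  finally show ?thesis .
qed

lemma positive_definite_congruence:
  fixes A U :: "real^'n^'n"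
  assumes "positive_definite A" and "inj ((*v) U)"
  shows "positive_definite (transpose U ** A ** U)"
  unfolding positive_definite_def quadratic_form_congruence
proof (intro allI impI)
  fix x :: "real^'n"
  assume "x \<noteq> 0"
  hence "U *v x \<noteq> 0" using assms(2) by (metis injD matrix_vector_mult_0_right)
  thus "0 < (U *v x) \<bullet> (A *v (U *v x))" using assms(1) by (simp add: positive_definite_def)
qed

lemma positive_definite_scaleR:
  assumes "positive_definite A" and "0 < c"
  shows "positive_definite (c *\<^sub>R A)"
  using assms by (simp add: positive_definite_def scaleR_matrix_vector_assoc[symmetric])

lemma positive_definite_imp_invertible:
  fixes A :: "real^'n^'n"
  assumes "positive_definite A"
  shows "invertible A"
proof -
  have "inj ((*v) A)"
  proof (rule injI)
    fix x y assume "A *v x = A *v y"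
    hence "(x - y) \<bullet> (A *v (x - y)) = 0" by (simp add: matrix_vector_mult_diff_distrib)
    thus "x = y" using assms unfolding positive_definite_def by (metis less_irrefl right_minus_eq)
  qed
  thus ?thesis using matrix_left_invertible_injective invertible_left_inverse by blast
qed

lemma matrix_inv_right: "invertible A \<Longrightarrow> A ** matrix_inv A = mat 1"
  and matrix_inv_left: "invertible A \<Longrightarrow> matrix_inv A ** A = mat 1"
  using someI_ex[of "\<lambda>A'. A ** A' = mat 1 \<and> A' ** A = mat 1"]
  unfolding invertible_def matrix_inv_def by auto

lemma symmetric_matrix_inv:
  fixes A :: "real^'n^'n"
  assumes sym: "transpose A = A" and inv: "invertible A"
  shows "transpose (matrix_inv A) = matrix_inv A"
proof -
  let ?N = "matrix_inv A"
  have "transpose ?N ** A = mat 1"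
    using arg_cong[OF matrix_inv_right[OF inv], of transpose] sym by (simp add: matrix_transpose_mul)
  have "transpose ?N = transpose ?N ** (A ** ?N)" using matrix_inv_right[OF inv] by simp
  also have "\<dots> = (transpose ?N ** A) ** ?N" by (simp add: matrix_mul_assoc)
  also have "\<dots> = ?N" using \<open>transpose ?N ** A = mat 1\<close> by simp
  finally show ?thesis .
qed

lemma positive_definite_matrix_inv:
  fixes A :: "real^'n^'n"
  assumes pd: "positive_definite A"
  shows "positive_definite (matrix_inv A)"
  unfolding positive_definite_def
proof (intro allI impI)
  fix x :: "real^'n"
  assume "x \<noteq> 0"
  define y where "y = matrix_inv A *v x"
  have Ay: "A *v y = x"
    using matrix_inv_right[OF positive_definite_imp_invertible[OF pd]]
    by (simp add: y_def matrix_vector_mul_assoc)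
  hence "y \<noteq> 0" using \<open>x \<noteq> 0\<close> by auto
  hence "0 < y \<bullet> (A *v y)" using pd by (simp add: positive_definite_def)
  thus "0 < x \<bullet> (matrix_inv A *v x)" using Ay by (simp add: y_def inner_commute)
qed

section \<open>The spectral theorem and real matrix powers\<close>

lemma rayleigh_maximizer_is_eigenvector:
  fixes A :: "real^'n^'n"
  assumes sym: "transpose A = A" and S: "subspace S" and inv: "\<forall>x\<in>S. A *v x \<in> S"
    and vS: "v \<in> S" and vv: "v \<bullet> v = 1"
    and max: "\<forall>x\<in>S. x \<bullet> (A *v x) \<le> (v \<bullet> (A *v v)) * (x \<bullet> x)"
  shows "A *v v = (v \<bullet> (A *v v)) *\<^sub>R v"
proof -
  define lam where "lam = v \<bullet> (A *v v)"
  define w where "w = A *v v - lam *\<^sub>R v"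
  have wS: "w \<in> S" using inv vS S by (simp add: w_def subspace_diff subspace_scale)
  have wv: "w \<bullet> v = 0" using vv by (simp add: w_def lam_def inner_diff_left inner_diff_right inner_commute)
  have Av: "A *v v = w + lam *\<^sub>R v" by (simp add: w_def)
  have wAv: "w \<bullet> (A *v v) = w \<bullet> w" using wv by (simp add: Av inner_add_right inner_commute)
  define c where "c = w \<bullet> (A *v w) - lam * (w \<bullet> w)"
  \<comment> \<open>Maximality of the Rayleigh quotient at v, tested along the line v + t w.\<close>
  have along_line: "t * (2 * (w \<bullet> w) + t * c) \<le> 0" for t
  proof -
    have "v + t *\<^sub>R w \<in> S" using vS wS S by (simp add: subspace_add subspace_scale)
    hence le: "(v + t *\<^sub>R w) \<bullet> (A *v (v + t *\<^sub>R w)) \<le> lam * ((v + t *\<^sub>R w) \<bullet> (v + t *\<^sub>R w))"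
      using max by (simp add: lam_def)
    have "(v + t *\<^sub>R w) \<bullet> (A *v (v + t *\<^sub>R w)) = lam + 2 * t * (w \<bullet> w) + t^2 * (w \<bullet> (A *v w))"
      using quadratic_form_add[OF sym, of v "t *\<^sub>R w"] wAv
      by (simp add: lam_def matrix_vector_mult_scaleR power2_eq_square)
    moreover have "(v + t *\<^sub>R w) \<bullet> (v + t *\<^sub>R w) = 1 + t^2 * (w \<bullet> w)"
      using vv wv by (simp add: inner_add_left inner_add_right power2_eq_square inner_commute)
    ultimately have "lam + 2 * t * (w \<bullet> w) + t^2 * (w \<bullet> (A *v w)) \<le> lam * (1 + t^2 * (w \<bullet> w))"
      using le by simp
    thus ?thesis by (simp add: c_def power2_eq_square algebra_simps)
  qed
  have "w \<bullet> w = 0"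
  proof (rule ccontr)
    assume "w \<bullet> w \<noteq> 0"
    hence pos: "w \<bullet> w > 0" by (simp add: order_le_neq_trans)
    define t where "t = (w \<bullet> w) / (\<bar>c\<bar> + 1)"
    have "t > 0" using pos by (simp add: t_def)
    hence "2 * (w \<bullet> w) + t * c \<le> 0" using along_line[of t] by (simp add: mult_le_0_iff)
    moreover have "t * c \<ge> - t * \<bar>c\<bar>" using \<open>t > 0\<close> mult_left_mono[of "-c" "\<bar>c\<bar>" t] by fastforce
    moreover have "t * \<bar>c\<bar> < w \<bullet> w" using pos by (simp add: t_def field_simps)
    ultimately show False using pos by linarith
  qed
  thus ?thesis using Av by (simp add: lam_def)
qed

lemma symmetric_matrix_has_eigenvector_in_subspace:
  fixes A :: "real^'n^'n"
  assumes sym: "transpose A = A" and S: "subspace S" and inv: "\<forall>x\<in>S. A *v x \<in> S"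
    and x0: "x0 \<in> S" "x0 \<noteq> 0"
  shows "\<exists>v lam. v \<in> S \<and> norm v = 1 \<and> A *v v = lam *\<^sub>R v"
proof -
  define K where "K = S \<inter> sphere 0 1"
  have "compact K" unfolding K_def
    by (metis S closed_subspace compact_Int_closed compact_sphere inf_commute)
  moreover have "x0 /\<^sub>R norm x0 \<in> K" using x0 S by (simp add: K_def subspace_scale)
  moreover have "continuous_on K (\<lambda>x. x \<bullet> (A *v x))"
    by (intro continuous_intros linear_continuous_on matrix_vector_mul_linear)
  ultimately obtain v where v: "v \<in> K" and vmax: "\<forall>x\<in>K. x \<bullet> (A *v x) \<le> v \<bullet> (A *v v)"
    using continuous_attains_sup[of K "\<lambda>x. x \<bullet> (A *v x)"] by blast
  have vS: "v \<in> S" and vv: "v \<bullet> v = 1" using v by (auto simp: K_def norm_eq_1)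
  have "x \<bullet> (A *v x) \<le> (v \<bullet> (A *v v)) * (x \<bullet> x)" if "x \<in> S" for x
  proof (cases "x = 0")
    case False
    have "x /\<^sub>R norm x \<in> K" using that False S by (simp add: K_def subspace_scale)
    hence "(x /\<^sub>R norm x) \<bullet> (A *v (x /\<^sub>R norm x)) \<le> v \<bullet> (A *v v)" using vmax by blast
    hence "(x \<bullet> (A *v x)) / (norm x)^2 \<le> v \<bullet> (A *v v)"
      by (simp add: matrix_vector_mult_scaleR power2_eq_square divide_inverse ac_simps)
    moreover have "(norm x)^2 > 0" using False by simp
    ultimately show ?thesis by (simp add: divide_le_eq power2_norm_eq_inner)
  qed simp
  hence "A *v v = (v \<bullet> (A *v v)) *\<^sub>R v"
    using rayleigh_maximizer_is_eigenvector[OF sym S inv vS vv] by blast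
  thus ?thesis using vS vv by (metis norm_eq_1)
qed

lemma symmetric_matrix_has_eigenvector_orthogonal_to:
  fixes A :: "real^'n^'n" and V :: "(real^'n) set"
  assumes sym: "transpose A = A" and V: "finite V" "card V < CARD('n)"
    and eig: "\<And>v. v \<in> V \<Longrightarrow> \<exists>lam. A *v v = lam *\<^sub>R v"
  shows "\<exists>u lam. norm u = 1 \<and> (\<forall>v\<in>V. v \<bullet> u = 0) \<and> A *v u = lam *\<^sub>R u"
proof -
  define S where "S = {x. \<forall>v\<in>V. v \<bullet> x = 0}"
  have S: "subspace S" by (auto simp: S_def subspace_def inner_add_right)
  have inv: "\<forall>x\<in>S. A *v x \<in> S"
  proof
    fix x assume "x \<in> S"
    have "v \<bullet> (A *v x) = 0" if v: "v \<in> V" for v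
    proof -
      obtain lam where "A *v v = lam *\<^sub>R v" using eig[OF v] by blast
      hence "v \<bullet> (A *v x) = lam * (v \<bullet> x)"
        using inner_symmetric_matrix[OF sym, of v x] by (simp add: inner_commute)
      thus ?thesis using \<open>x \<in> S\<close> v by (simp add: S_def)
    qed
    thus "A *v x \<in> S" by (simp add: S_def)
  qed
  have "dim V < DIM(real^'n)" using dim_le_card'[OF V(1)] V(2) by simp
  then obtain a :: "real^'n" where a: "a \<noteq> 0" "span V \<subseteq> {x. a \<bullet> x = 0}"
    using lowdim_subset_hyperplane by blast
  hence "a \<in> S" using span_base by (fastforce simp: S_def inner_commute)
  then obtain u lam where "u \<in> S" "norm u = 1" "A *v u = lam *\<^sub>R u"
    using symmetric_matrix_has_eigenvector_in_subspace[OF sym S inv _ a(1)] by blast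
  thus ?thesis by (auto simp: S_def)
qed

lemma symmetric_matrix_orthonormal_eigenvectors:
  fixes A :: "real^'n^'n" and I :: "'n set"
  assumes sym: "transpose A = A"
  shows "\<exists>v lam. (\<forall>i\<in>I. \<forall>j\<in>I. v i \<bullet> v j = (if i = j then 1 else 0)) \<and>
                 (\<forall>i\<in>I. A *v v i = lam i *\<^sub>R v i)"
  using finite[of I]
proof (induction I rule: finite_induct)
  case empty
  show ?case by auto
next
  case (insert i I)
  then obtain v lam where orth: "\<forall>a\<in>I. \<forall>b\<in>I. v a \<bullet> v b = (if a = b then 1 else 0)"
    and eig: "\<forall>a\<in>I. A *v v a = lam a *\<^sub>R v a" by blast
  have "card (v ` I) < CARD('n)"
    using card_image_le[OF insert(1), of v] card_mono[of UNIV "insert i I"] insert(1,2) by simp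
  then obtain u mu where u: "norm u = 1" "\<forall>w\<in>v ` I. w \<bullet> u = 0" "A *v u = mu *\<^sub>R u"
    using symmetric_matrix_has_eigenvector_orthogonal_to[OF sym, of "v ` I"] eig insert(1) by blast
  have "u \<bullet> u = 1" using u(1) by (simp add: norm_eq_1)
  hence "\<forall>a\<in>insert i I. \<forall>b\<in>insert i I. (v(i := u)) a \<bullet> (v(i := u)) b = (if a = b then 1 else 0)"
    using orth u(2) insert(2) by (auto simp: inner_commute)
  moreover have "\<forall>a\<in>insert i I. A *v (v(i := u)) a = (lam(i := mu)) a *\<^sub>R (v(i := u)) a"
    using eig u(3) insert(2) by auto
  ultimately show ?case by blast
qed

lemma diag_mat_mult_vector: "diag_mat f *v z = (\<chi> i. f i * z $ i)"
proof -
  have "(\<Sum>j\<in>UNIV. (if i = j then f i else 0) * z $ j) = f i * z $ i" for i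
    by (simp add: if_distrib[of "\<lambda>c. c * _"] cong: if_cong)
  thus ?thesis by (simp add: diag_mat_def matrix_vector_mult_def vec_eq_iff)
qed

lemma transpose_diag_mat: "transpose (diag_mat f) = diag_mat f"
  by (simp add: diag_mat_def transpose_def vec_eq_iff)

theorem symmetric_matrix_orthogonally_diagonalizable:
  fixes A :: "real^'n^'n"
  assumes sym: "transpose A = A"
  shows "\<exists>U lam. orthogonal_matrix U \<and> A = U ** diag_mat lam ** transpose U"
proof -
  obtain v :: "'n \<Rightarrow> real^'n" and lam where orth: "\<And>i j. v i \<bullet> v j = (if i = j then 1 else 0)"
    and eig: "\<And>i. A *v v i = lam i *\<^sub>R v i"
    using symmetric_matrix_orthonormal_eigenvectors[OF sym, of UNIV] by auto
  define U :: "real^'n^'n" where "U = (\<chi> r c. v c $ r)"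
  have "column c U = v c" for c by (simp add: U_def column_def)
  hence U: "orthogonal_matrix U"
    using orth by (simp add: orthogonal_matrix_orthonormal_columns norm_eq_1 orthogonal_def)
  have "A ** U = U ** diag_mat lam"
  proof -
    have "(A ** U) $ r $ c = (A *v v c) $ r" for r c
      by (simp add: U_def matrix_matrix_mult_def matrix_vector_mult_def)
    moreover have "(U ** diag_mat lam) $ r $ c = lam c * v c $ r" for r c
      by (simp add: U_def matrix_matrix_mult_def diag_mat_def if_distrib cong: if_cong)
    ultimately show ?thesis using eig by (simp add: vec_eq_iff)
  qed
  hence "A ** (U ** transpose U) = U ** diag_mat lam ** transpose U"
    by (metis matrix_mul_assoc)
  thus ?thesis using U by (auto simp: orthogonal_matrix_def)
qed

lemma positive_definite_diag_mat:
  fixes mu :: "'n::finite \<Rightarrow> real"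
  shows "positive_definite (diag_mat mu) \<longleftrightarrow> (\<forall>i. 0 < mu i)"
proof
  assume pd: "positive_definite (diag_mat mu)"
  show "\<forall>i. 0 < mu i"
  proof
    fix i
    have "0 < axis i 1 \<bullet> (diag_mat mu *v axis i (1::real))"
      using pd by (simp add: positive_definite_def axis_eq_0_iff)
    thus "0 < mu i" by (simp add: diag_mat_mult_vector inner_axis')
  qed
next
  assume pos: "\<forall>i. 0 < mu i"
  show "positive_definite (diag_mat mu)"
    unfolding positive_definite_def
  proof (intro allI impI)
    fix z :: "real^'n" assume "z \<noteq> 0"
    then obtain k where k: "z $ k \<noteq> 0" by (metis vec_eq_iff zero_index)
    have "0 < mu k * (z $ k)^2" using pos k by (simp add: mult_pos_pos)
    moreover have "0 \<le> mu i * (z $ i)^2" for i using pos by (simp add: less_imp_le)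
    ultimately have "0 < (\<Sum>i\<in>UNIV. mu i * (z $ i)^2)" by (intro sum_pos2[of UNIV k]) auto
    thus "0 < z \<bullet> (diag_mat mu *v z)"
      by (simp add: diag_mat_mult_vector inner_vec_def power2_eq_square ac_simps)
  qed
qed

lemma orthogonal_matrix_inj:
  fixes U :: "real^'n^'n"
  assumes "orthogonal_matrix U"
  shows "inj ((*v) U)"
proof -
  have "invertible U" using assms unfolding orthogonal_matrix_def invertible_def by blast
  thus ?thesis by (rule inj_matrix_vector_mult)
qed

lemma positive_definite_orthogonal_diag_iff:
  fixes U :: "real^'n^'n"
  assumes U: "orthogonal_matrix U"
  shows "positive_definite (U ** diag_mat lam ** transpose U) \<longleftrightarrow> (\<forall>i. 0 < lam i)"
proof
  assume "positive_definite (U ** diag_mat lam ** transpose U)"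
  hence "positive_definite (transpose U ** (U ** diag_mat lam ** transpose U) ** U)"
    by (rule positive_definite_congruence[OF _ orthogonal_matrix_inj[OF U]])
  moreover have "transpose U ** (U ** diag_mat lam ** transpose U) ** U = diag_mat lam"
  proof -
    have "transpose U ** (U ** diag_mat lam ** transpose U) ** U
        = (transpose U ** U) ** diag_mat lam ** (transpose U ** U)"
      by (simp add: matrix_mul_assoc)
    thus ?thesis using U by (simp add: orthogonal_matrix_def)
  qed
  ultimately show "\<forall>i. 0 < lam i" by (simp add: positive_definite_diag_mat)
next
  assume "\<forall>i. 0 < lam i"
  hence "positive_definite (transpose (transpose U) ** diag_mat lam ** transpose U)"
    using U by (intro positive_definite_congruence orthogonal_matrix_inj)
      (simp_all add: positive_definite_diag_mat del: transpose_transpose)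
  thus "positive_definite (U ** diag_mat lam ** transpose U)" by simp
qed

lemma mat_powr_symmetric_positive_definite:
  fixes A :: "real^'n^'n"
  assumes sym: "transpose A = A" and pd: "positive_definite A"
  shows "transpose (mat_powr A r) = mat_powr A r" and "positive_definite (mat_powr A r)"
proof -
  let ?P = "\<lambda>M. \<exists>U lam. orthogonal_matrix U \<and> A = U ** diag_mat lam ** transpose U \<and>
       M = U ** diag_mat (\<lambda>i. lam i powr r) ** transpose U"
  have "\<exists>M. ?P M" using symmetric_matrix_orthogonally_diagonalizable[OF sym] by blast
  hence "?P (mat_powr A r)" unfolding mat_powr_def by (rule someI_ex)
  then obtain U lam where U: "orthogonal_matrix U" and A: "A = U ** diag_mat lam ** transpose U"
    and M: "mat_powr A r = U ** diag_mat (\<lambda>i. lam i powr r) ** transpose U" by blast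
  have "\<forall>i. 0 < lam i" using pd by (simp add: A positive_definite_orthogonal_diag_iff[OF U])
  hence "\<forall>i. 0 < lam i powr r" by (metis order_less_irrefl powr_gt_zero)
  thus "positive_definite (mat_powr A r)" by (simp add: M positive_definite_orthogonal_diag_iff[OF U])
  show "transpose (mat_powr A r) = mat_powr A r"
    by (simp add: M matrix_transpose_mul transpose_diag_mat matrix_mul_assoc)
qed

section \<open>Normalized graph Laplacians\<close>

lemma laplacian_quadratic_form:
  fixes W :: "real^'n^'n"
  assumes W_sym: "transpose W = W" and d: "\<And>i. d i = (\<Sum>j\<in>UNIV. W $ i $ j)"
  shows "x \<bullet> ((diag_mat d - W) *v x) = (\<Sum>i\<in>UNIV. \<Sum>j\<in>UNIV. W $ i $ j * (x $ i - x $ j)^2) / 2"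
proof -
  have W_swap: "W $ i $ j = W $ j $ i" for i j
    using arg_cong[OF W_sym, of "\<lambda>A. A $ j $ i"] by (simp add: transpose_def)
  have D: "x \<bullet> (diag_mat d *v x) = (\<Sum>i\<in>UNIV. \<Sum>j\<in>UNIV. W $ i $ j * (x $ i)^2)"
    by (simp add: diag_mat_mult_vector inner_vec_def d sum_distrib_left sum_distrib_right
        power2_eq_square ac_simps)
  also have "\<dots> = (\<Sum>i\<in>UNIV. \<Sum>j\<in>UNIV. W $ i $ j * (x $ j)^2)"
    by (subst sum.swap) (simp add: W_swap)
  finally have D': "x \<bullet> (diag_mat d *v x) = (\<Sum>i\<in>UNIV. \<Sum>j\<in>UNIV. W $ i $ j * (x $ j)^2)" .
  have Wx: "x \<bullet> (W *v x) = (\<Sum>i\<in>UNIV. \<Sum>j\<in>UNIV. W $ i $ j * (x $ i * x $ j))"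
    by (simp add: inner_vec_def matrix_vector_mult_def sum_distrib_left ac_simps)
  have "(\<Sum>i\<in>UNIV. \<Sum>j\<in>UNIV. W $ i $ j * (x $ i - x $ j)^2)
      = (\<Sum>i\<in>UNIV. \<Sum>j\<in>UNIV. W $ i $ j * (x $ i)^2) + (\<Sum>i\<in>UNIV. \<Sum>j\<in>UNIV. W $ i $ j * (x $ j)^2)
        - 2 * (\<Sum>i\<in>UNIV. \<Sum>j\<in>UNIV. W $ i $ j * (x $ i * x $ j))"
    by (simp add: power2_diff algebra_simps sum.distrib sum_subtractf sum_distrib_left)
  thus ?thesis using D D' Wx by (simp add: matrix_vector_mult_diff_rdistrib inner_diff_right)
qed

lemma shifted_normalized_laplacian_symmetric_positive_definite:
  fixes W :: "real^'n^'n"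
  assumes W_sym: "transpose W = W" and W_nonneg: "\<And>i j. 0 \<le> W $ i $ j"
    and d: "\<And>i. d i = (\<Sum>j\<in>UNIV. W $ i $ j)"
    and L: "L = diag_mat s ** (diag_mat d - W) ** diag_mat s"
    and tau2: "0 < tau2"
  shows "transpose (L + tau2 *\<^sub>R mat 1) = L + tau2 *\<^sub>R mat 1"
    and "positive_definite (L + tau2 *\<^sub>R mat 1)"
proof -
  have "transpose (diag_mat d - W) = diag_mat d - W"
    using W_sym by (simp add: diag_mat_def transpose_def vec_eq_iff)
  hence "transpose L = L"
    by (simp add: L matrix_transpose_mul transpose_diag_mat matrix_mul_assoc)
  thus "transpose (L + tau2 *\<^sub>R mat 1) = L + tau2 *\<^sub>R mat 1"
    by (simp add: transpose_def vec_eq_iff mat_def)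
  show "positive_definite (L + tau2 *\<^sub>R mat 1)"
    unfolding positive_definite_def
  proof (intro allI impI)
    fix x :: "real^'n" assume "x \<noteq> 0"
    have "x \<bullet> (L *v x) = (diag_mat s *v x) \<bullet> ((diag_mat d - W) *v (diag_mat s *v x))"
      using quadratic_form_congruence[of x "diag_mat s" "diag_mat d - W"] by (simp add: L transpose_diag_mat)
    moreover have "0 \<le> (diag_mat s *v x) \<bullet> ((diag_mat d - W) *v (diag_mat s *v x))"
      unfolding laplacian_quadratic_form[OF W_sym d]
      by (intro divide_nonneg_pos sum_nonneg mult_nonneg_nonneg W_nonneg) auto
    moreover have "x \<bullet> ((L + tau2 *\<^sub>R mat 1) *v x) = x \<bullet> (L *v x) + tau2 * (x \<bullet> x)"
      by (simp add: matrix_vector_mult_add_rdistrib scaleR_matrix_vector_assoc[symmetric] inner_add_right)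
    ultimately show "0 < x \<bullet> ((L + tau2 *\<^sub>R mat 1) *v x)" using tau2 \<open>x \<noteq> 0\<close>
      by (simp add: add_nonneg_pos)
  qed
qed

lemma regularized_laplacian_power_symmetric_positive_definite:
  fixes W :: "real^'n^'n"
  assumes "transpose W = W" and "\<And>i j. 0 \<le> W $ i $ j"
    and "\<And>i. d i = (\<Sum>j\<in>UNIV. W $ i $ j)"
    and "L = diag_mat s ** (diag_mat d - W) ** diag_mat s"
    and "0 < tau2" and c: "0 < c"
  shows "transpose (c *\<^sub>R mat_powr (L + tau2 *\<^sub>R mat 1) r) = c *\<^sub>R mat_powr (L + tau2 *\<^sub>R mat 1) r"
    and "positive_definite (c *\<^sub>R mat_powr (L + tau2 *\<^sub>R mat 1) r)"
  using mat_powr_symmetric_positive_definite[OF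
      shifted_normalized_laplacian_symmetric_positive_definite[OF assms(1-5)]] c
  by (simp_all add: transpose_scalar positive_definite_scaleR)

section \<open>Cumulative distribution functions of log-concave densities\<close>

lemma strictly_concave_on_imp_concave_on:
  assumes "strictly_concave_on S f"
  shows "concave_on S f"
  unfolding concave_on_def
proof (rule convex_onI)
  fix t :: real and x y assume t: "0 < t" "t < 1" and xy: "x \<in> S" "y \<in> S"
  show "- f ((1 - t) *\<^sub>R x + t *\<^sub>R y) \<le> (1 - t) * - f x + t * - f y"
  proof (cases "x = y")
    case True
    have "(1 - t) * - f x + t * - f x = - f x" by (simp add: algebra_simps)
    thus ?thesis using True by (simp add: scaleR_collapse)
  next
    case False
    thus ?thesis using assms t xy unfolding strictly_concave_on_def by force
  qed
qed (use assms in \<open>simp add: strictly_concave_on_def\<close>)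

lemma concave_on_outer_le_inner:
  fixes h :: "real \<Rightarrow> real"
  assumes h: "concave_on I h" and ad: "a \<in> I" "d \<in> I"
    and "a \<le> b" "b \<le> d" "a + d = b + c"
  shows "h a + h d \<le> h b + h c"
proof (cases "a = d")
  case True
  thus ?thesis using assms by simp
next
  case False
  define t where "t = (b - a) / (d - a)"
  have t: "0 \<le> t" "t \<le> 1" using assms False by (auto simp: t_def field_simps)
  have td: "t * (d - a) = b - a" using False by (simp add: t_def)
  have "(1 - t) * a + t * d = a + t * (d - a)"
    and "t * a + (1 - t) * d = d - t * (d - a)" by (simp_all add: algebra_simps)
  hence b: "b = (1 - t) * a + t * d" and c: "c = t * a + (1 - t) * d"
    using td assms(6) by (simp_all add: algebra_simps)
  have "h b \<ge> (1 - t) * h a + t * h d"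
    using concave_onD[OF h t ad] by (simp only: b real_scaleR_def)
  moreover have "h c \<ge> t * h a + (1 - t) * h d"
  proof -
    have "1 - (1 - t) = t" by simp
    thus ?thesis using concave_onD[OF h _ _ ad, of "1 - t"] t by (simp only: c real_scaleR_def)
  qed
  ultimately show ?thesis by (simp add: algebra_simps)
qed

lemma has_integral_shift_UNIV:
  fixes f :: "real \<Rightarrow> real"
  assumes nonneg: "\<And>x. 0 \<le> f x" and f: "(f has_integral r) UNIV"
  shows "((\<lambda>x. f (t + x)) has_integral r) UNIV"
proof -
  have m: "f \<in> borel_measurable lebesgue" "integral\<^sup>N lebesgue f = r" "0 \<le> r"
    using f has_integral_iff_nn_integral_lebesgue[of f r] nonneg by auto
  have "(\<lambda>x. f (t + x)) \<in> borel_measurable lebesgue"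
    using borel_measurable_affine[OF m(1), of 1 t] by simp
  moreover have "(\<lambda>x. ennreal (f x)) \<in> borel_measurable lebesgue" using m(1) by measurable
  hence "integral\<^sup>N lebesgue (\<lambda>x. f (t + x)) = integral\<^sup>N lebesgue f"
    using nn_integral_real_affine_lebesgue[of _ 1 t] by simp
  ultimately show ?thesis
    using has_integral_iff_nn_integral_lebesgue[of "\<lambda>x. f (t + x)" r] nonneg m by auto
qed

locale continuous_density =
  fixes \<psi> \<Psi> :: "real \<Rightarrow> real"
  assumes density_continuous: "continuous_on UNIV \<psi>"
    and density_pos: "\<And>x. 0 < \<psi> x"
    and density_integrable: "\<psi> integrable_on UNIV"
    and cdf_def: "\<And>x. \<Psi> x = integral {..x} \<psi>"
begin

lemma cdf_has_integral: "(\<psi> has_integral \<Psi> x) {..x}"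
proof -
  have "\<psi> absolutely_integrable_on UNIV"
    using density_integrable density_pos by (intro nonnegative_absolutely_integrable_1) (auto intro: less_imp_le)
  hence "\<psi> absolutely_integrable_on {..x}" by (rule set_integrable_subset) auto
  thus ?thesis by (simp add: cdf_def absolutely_integrable_on_def has_integral_integral)
qed

lemma cdf_split:
  assumes "a \<le> x"
  shows "\<Psi> x = \<Psi> a + integral {a..x} \<psi>"
proof -
  have "(\<psi> has_integral integral {a..x} \<psi>) {a..x}"
    using integrable_continuous_real[OF continuous_on_subset[OF density_continuous]]
    by (simp add: has_integral_integral)
  moreover have "{..a} \<inter> {a..x} = {a}" and "{..a} \<union> {a..x} = {..x}" using assms by auto
  ultimately have "(\<psi> has_integral (\<Psi> a + integral {a..x} \<psi>)) {..x}"
    using has_integral_Un[OF cdf_has_integral[of a]] by (metis negligible_sing)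
  thus ?thesis using cdf_has_integral[of x] has_integral_unique by blast
qed

lemma cdf_pos: "0 < \<Psi> x"
proof -
  obtain m where "m \<in> {x-1..x}" and m: "\<forall>t\<in>{x-1..x}. \<psi> m \<le> \<psi> t"
    using continuous_attains_inf[of "{x-1..x}" \<psi>] continuous_on_subset[OF density_continuous] by auto
  have "(\<psi> has_integral integral {x-1..x} \<psi>) {x-1..x}"
    using integrable_continuous_real[OF continuous_on_subset[OF density_continuous]]
    by (simp add: has_integral_integral)
  hence "\<psi> m \<le> integral {x-1..x} \<psi>"
    using has_integral_le[OF has_integral_const_real[of "\<psi> m" "x-1" x]] m by auto
  moreover have "0 \<le> \<Psi> (x - 1)"
    using has_integral_nonneg[OF cdf_has_integral] density_pos by (simp add: less_imp_le)
  ultimately show ?thesis using cdf_split[of "x-1" x] density_pos[of m] by simp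
qed

lemma cdf_has_derivative: "(\<Psi> has_real_derivative \<psi> x) (at x)"
proof -
  have "((\<lambda>u. integral {x-1..u} \<psi>) has_real_derivative \<psi> x) (at x within {x-1..x+1})"
    by (rule integral_has_real_derivative) (auto intro: continuous_on_subset[OF density_continuous])
  hence "((\<lambda>u. integral {x-1..u} \<psi>) has_real_derivative \<psi> x) (at x)"
    using at_within_interior[of x "{x-1..x+1}"] by simp
  hence "((\<lambda>u. \<Psi> (x-1) + integral {x-1..u} \<psi>) has_real_derivative \<psi> x) (at x)"
    using DERIV_add[OF DERIV_const] by fastforce
  thus ?thesis
  proof (rule has_field_derivative_transform_within_open[of _ _ _ "{x-1<..<x+1}"])
    fix u assume "u \<in> {x-1<..<x+1}"
    thus "\<Psi> (x - 1) + integral {x - 1..u} \<psi> = \<Psi> u" using cdf_split[of "x-1" u] by simp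
  qed auto
qed

lemma ln_cdf_has_derivative: "((\<lambda>x. ln (\<Psi> x)) has_real_derivative \<psi> x / \<Psi> x) (at x)"
  using DERIV_chain2[OF DERIV_ln_divide[OF cdf_pos] cdf_has_derivative] by simp

lemma ln_cdf_scaled_has_derivative:
  "((\<lambda>s. ln (\<Psi> (s * c))) has_real_derivative c * \<psi> (s * c) / \<Psi> (s * c)) (at s)"
proof -
  have "((\<lambda>s. s * c) has_real_derivative c) (at s)" by (auto intro!: derivative_eq_intros)
  from DERIV_chain2[OF ln_cdf_has_derivative this] show ?thesis by (simp add: ac_simps)
qed

end

locale log_concave_density = continuous_density +
  assumes log_concave: "concave_on UNIV (\<lambda>x. ln (\<psi> x))"
begin

\<comment> \<open>Log-concavity gives psi(t) psi(y) <= psi(x) psi(t + y - x) for t <= x; integrate over t <= x.\<close>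
lemma density_cdf_cross_le:
  assumes "x \<le> y"
  shows "\<psi> y * \<Psi> x \<le> \<psi> x * \<Psi> y"
proof -
  have integral: "((\<lambda>t. if t \<in> {..y} then \<psi> t else 0) has_integral \<Psi> y) UNIV"
    using cdf_has_integral[of y] by (simp only: has_integral_restrict_UNIV)
  have nonneg: "0 \<le> (if t \<in> {..y} then \<psi> t else 0)" for t
    using density_pos[of t] by simp
  have "((\<lambda>t. if (y - x) + t \<in> {..y} then \<psi> ((y - x) + t) else 0) has_integral \<Psi> y) UNIV"
    using has_integral_shift_UNIV[OF nonneg integral, of "y - x"] .
  moreover have "(y - x) + t \<in> {..y} \<longleftrightarrow> t \<in> {..x}" for t by auto
  ultimately have "((\<lambda>t. \<psi> ((y - x) + t)) has_integral \<Psi> y) {..x}"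
    by (simp only: has_integral_restrict_UNIV)
  hence shifted: "((\<lambda>t. \<psi> x * \<psi> ((y - x) + t)) has_integral \<psi> x * \<Psi> y) {..x}"
    by (rule has_integral_mult_right)
  have unshifted: "((\<lambda>t. \<psi> y * \<psi> t) has_integral \<psi> y * \<Psi> x) {..x}"
    by (rule has_integral_mult_right[OF cdf_has_integral])
  have "\<psi> y * \<psi> t \<le> \<psi> x * \<psi> ((y - x) + t)" if "t \<in> {..x}" for t
  proof -
    have "ln (\<psi> t) + ln (\<psi> y) \<le> ln (\<psi> x) + ln (\<psi> ((y - x) + t))"
      using concave_on_outer_le_inner[OF log_concave, of t y x "(y - x) + t"] that assms by simp
    hence "ln (\<psi> t * \<psi> y) \<le> ln (\<psi> x * \<psi> ((y - x) + t))" by (simp add: ln_mult_pos density_pos)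
    hence "\<psi> t * \<psi> y \<le> \<psi> x * \<psi> ((y - x) + t)" by (simp add: density_pos)
    thus ?thesis by (simp add: mult.commute)
  qed
  thus ?thesis by (rule has_integral_le[OF unshifted shifted])
qed

lemma reversed_hazard_antimono:
  assumes "x \<le> y"
  shows "\<psi> y / \<Psi> y \<le> \<psi> x / \<Psi> x"
  using density_cdf_cross_le[OF assms] cdf_pos[of x] cdf_pos[of y]
  by (simp add: divide_simps ac_simps)

lemma ln_cdf_tangent: "ln (\<Psi> t) \<le> ln (\<Psi> s) + \<psi> s / \<Psi> s * (t - s)"
proof (cases t s rule: linorder_cases)
  case less
  then obtain z where z: "t < z" "z < s" "ln (\<Psi> s) - ln (\<Psi> t) = (s - t) * (\<psi> z / \<Psi> z)"
    using MVT2[OF less, of "\<lambda>x. ln (\<Psi> x)" "\<lambda>x. \<psi> x / \<Psi> x"] ln_cdf_has_derivative by blast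
  moreover have "(s - t) * (\<psi> s / \<Psi> s) \<le> (s - t) * (\<psi> z / \<Psi> z)"
    using less z(2) reversed_hazard_antimono[of z s] by (intro mult_left_mono) auto
  moreover have "\<psi> s / \<Psi> s * (t - s) = - ((s - t) * (\<psi> s / \<Psi> s))"
    by (metis minus_diff_eq mult.commute mult_minus_left)
  ultimately show ?thesis by linarith
next
  case greater
  then obtain z where z: "s < z" "z < t" "ln (\<Psi> t) - ln (\<Psi> s) = (t - s) * (\<psi> z / \<Psi> z)"
    using MVT2[OF greater, of "\<lambda>x. ln (\<Psi> x)" "\<lambda>x. \<psi> x / \<Psi> x"] ln_cdf_has_derivative by blast
  moreover have "(t - s) * (\<psi> z / \<Psi> z) \<le> (t - s) * (\<psi> s / \<Psi> s)"
    using greater z(1) reversed_hazard_antimono[of s z] by (intro mult_left_mono) auto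
  moreover have "\<psi> s / \<Psi> s * (t - s) = (t - s) * (\<psi> s / \<Psi> s)" by (simp add: mult.commute)
  ultimately show ?thesis by linarith
qed simp

lemma ln_cdf_scaled_tangent:
  "ln (\<Psi> (t * c)) \<le> ln (\<Psi> (s * c)) + c * \<psi> (s * c) / \<Psi> (s * c) * (t - s)"
  using ln_cdf_tangent[of "t * c" "s * c"] by (simp add: algebra_simps)

end

section \<open>Minimising a quadratic form minus separable concave terms\<close>

locale quadratic_separable_objective =
  fixes M :: "real^'m^'m" and K :: "'m set" and g g' :: "'m \<Rightarrow> real \<Rightarrow> real"
    and G :: "real^'m \<Rightarrow> real"
  assumes M_symmetric: "transpose M = M" and M_positive_definite: "positive_definite M"
    and g_deriv: "\<And>k s. (g k has_real_derivative g' k s) (at s)"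
    and g_tangent: "\<And>k s t. g k t \<le> g k s + g' k s * (t - s)"
    and G_eq: "\<And>u. G u = 1/2 * (u \<bullet> (M *v u)) - (\<Sum>k\<in>K. g k (u $ k))"
begin

lemma stationary_imp_strict_min:
  assumes stat: "M *v u = (\<chi> i. if i \<in> K then g' i (u $ i) else 0)" and "v \<noteq> u"
  shows "G u < G v"
proof -
  define w where "w = v - u"
  have "0 < w \<bullet> (M *v w)" using M_positive_definite \<open>v \<noteq> u\<close> by (simp add: w_def positive_definite_def)
  moreover have "v \<bullet> (M *v v) = u \<bullet> (M *v u) + 2 * (w \<bullet> (M *v u)) + w \<bullet> (M *v w)"
    using quadratic_form_add[OF M_symmetric, of u w] by (simp add: w_def)
  moreover have "w \<bullet> (M *v u) = (\<Sum>k\<in>K. g' k (u $ k) * w $ k)"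
    by (simp add: stat inner_vec_def if_distrib sum.If_cases ac_simps)
  moreover have "(\<Sum>k\<in>K. g k (v $ k)) \<le> (\<Sum>k\<in>K. g k (u $ k)) + (\<Sum>k\<in>K. g' k (u $ k) * w $ k)"
    unfolding sum.distrib[symmetric] by (rule sum_mono) (simp add: g_tangent w_def)
  ultimately show ?thesis unfolding G_eq by linarith
qed

lemma has_derivative_along_axis:
  "((\<lambda>t. G (u + t *\<^sub>R axis i 1)) has_real_derivative
     (M *v u) $ i - (if i \<in> K then g' i (u $ i) else 0)) (at 0)"
proof -
  define e :: "real^'m" where "e = axis i 1"
  have G_line: "G (u + t *\<^sub>R e) = 1/2 * (u \<bullet> (M *v u)) + t * (e \<bullet> (M *v u))
      + t^2 / 2 * (e \<bullet> (M *v e)) - (\<Sum>k\<in>K. g k (u $ k + t * e $ k))" for t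
    using quadratic_form_add[OF M_symmetric, of u "t *\<^sub>R e"] inner_symmetric_matrix[OF M_symmetric, of u e]
    by (simp add: G_eq matrix_vector_mult_scaleR power2_eq_square algebra_simps)
  have "((\<lambda>t. g k (u $ k + t * e $ k)) has_real_derivative g' k (u $ k) * e $ k) (at 0)" for k
  proof -
    have "((\<lambda>t. u $ k + t * e $ k) has_real_derivative e $ k) (at 0)"
      by (auto intro!: derivative_eq_intros)
    from DERIV_chain2[OF g_deriv this] show ?thesis by simp
  qed
  hence "((\<lambda>t. G (u + t *\<^sub>R e)) has_real_derivative
      e \<bullet> (M *v u) - (\<Sum>k\<in>K. g' k (u $ k) * e $ k)) (at 0)"
    unfolding G_line by (auto intro!: derivative_eq_intros DERIV_sum)
  moreover have "(\<Sum>k\<in>K. g' k (u $ k) * e $ k) = (if i \<in> K then g' i (u $ i) else 0)"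
    by (simp add: e_def axis_def if_distrib sum.delta' cong: if_cong)
  ultimately show ?thesis by (simp add: e_def inner_axis')
qed

lemma min_iff_stationary:
  "(\<forall>v. G u \<le> G v) \<longleftrightarrow> M *v u = (\<chi> i. if i \<in> K then g' i (u $ i) else 0)"
proof
  assume "\<forall>v. G u \<le> G v"
  hence "(M *v u) $ i - (if i \<in> K then g' i (u $ i) else 0) = 0" for i
    using DERIV_local_min[OF has_derivative_along_axis, of 1] by simp
  thus "M *v u = (\<chi> i. if i \<in> K then g' i (u $ i) else 0)" by (simp add: vec_eq_iff)
next
  assume "M *v u = (\<chi> i. if i \<in> K then g' i (u $ i) else 0)"
  thus "\<forall>v. G u \<le> G v" using stationary_imp_strict_min by (metis order.refl less_imp_le)
qed

lemma min_unique:
  assumes "\<forall>v. G u \<le> G v" and "\<forall>v. G w \<le> G v"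
  shows "u = w"
  using assms stationary_imp_strict_min min_iff_stationary by (metis not_less)

end

section \<open>Principal submatrices\<close>

locale principal_submatrix =
  fixes C :: "real^'n^'n" and C' :: "real^'j^'j" and Z :: "'n set" and \<pi> :: "'n \<Rightarrow> 'j"
  assumes \<pi>_bij: "bij_betw \<pi> Z UNIV"
    and entries: "\<And>i j. i \<in> Z \<Longrightarrow> j \<in> Z \<Longrightarrow> C' $ \<pi> i $ \<pi> j = C $ i $ j"
begin

definition embed :: "real^'j \<Rightarrow> real^'n" where
  "embed x = (\<chi> i. if i \<in> Z then x $ \<pi> i else 0)"

definition restr :: "real^'n \<Rightarrow> real^'j" where
  "restr u = (\<chi> k. u $ inv_into Z \<pi> k)"

lemma inv_into_mem: "inv_into Z \<pi> k \<in> Z"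
  using bij_betw_apply[OF bij_betw_inv_into[OF \<pi>_bij]] by blast

lemma \<pi>_inv_into [simp]: "\<pi> (inv_into Z \<pi> k) = k"
  using bij_betw_inv_into_right[OF \<pi>_bij] by blast

lemma inv_into_\<pi> [simp]: "i \<in> Z \<Longrightarrow> inv_into Z \<pi> (\<pi> i) = i"
  using bij_betw_inv_into_left[OF \<pi>_bij] by blast

lemma entries_inv_into: "C' $ k $ l = C $ inv_into Z \<pi> k $ inv_into Z \<pi> l"
  using entries[OF inv_into_mem inv_into_mem] by simp

lemma sum_restrict_to_Z:
  "(\<Sum>i\<in>UNIV. if i \<in> Z then f i else 0) = (\<Sum>k\<in>UNIV. f (inv_into Z \<pi> k) :: real)"
  using sum.reindex_bij_betw[OF bij_betw_inv_into[OF \<pi>_bij], of f]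
  by (simp add: sum.If_cases)

lemma restr_mult_embed: "restr (C *v embed x) = C' *v x"
  by (simp add: restr_def embed_def matrix_vector_mult_def vec_eq_iff if_distrib
      sum_restrict_to_Z entries_inv_into cong: if_cong)

lemma inner_embed: "embed x \<bullet> w = x \<bullet> restr w"
proof -
  have "embed x \<bullet> w = (\<Sum>i\<in>UNIV. if i \<in> Z then x $ \<pi> i * w $ i else 0)"
    unfolding inner_vec_def embed_def by (intro sum.cong) auto
  thus ?thesis by (simp add: sum_restrict_to_Z restr_def inner_vec_def)
qed

lemma embed_restr_map:
  "embed (\<chi> k. f (inv_into Z \<pi> k) (restr u $ k)) = (\<chi> i. if i \<in> Z then f i (u $ i) else 0)"
  by (simp add: embed_def restr_def vec_eq_iff)

lemma symmetric:
  assumes "transpose C = C"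
  shows "transpose C' = C'"
proof -
  have "C $ i $ j = C $ j $ i" for i j
    using arg_cong[OF assms, of "\<lambda>A. A $ j $ i"] by (simp add: transpose_def)
  thus ?thesis by (simp add: transpose_def vec_eq_iff entries_inv_into)
qed

lemma positive_definite: "positive_definite C \<Longrightarrow> positive_definite C'"
  unfolding positive_definite_def
proof (intro allI impI)
  fix x :: "real^'j"
  assume pd: "\<forall>x. x \<noteq> 0 \<longrightarrow> 0 < x \<bullet> (C *v x)" and "x \<noteq> 0"
  then obtain k where "x $ k \<noteq> 0" by (metis vec_eq_iff zero_index)
  moreover have "embed x $ inv_into Z \<pi> k = x $ k" by (simp add: embed_def inv_into_mem)
  ultimately have "embed x \<noteq> 0" by auto
  hence "0 < embed x \<bullet> (C *v embed x)" using pd by blast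
  thus "0 < x \<bullet> (C' *v x)" by (simp add: inner_embed restr_mult_embed)
qed

lemma sum_columns: "(\<Sum>j\<in>Z. x $ \<pi> j *\<^sub>R column j C) = C *v embed x"
proof -
  have "C *v embed x = (\<Sum>i\<in>UNIV. embed x $ i *\<^sub>R column i C)"
    by (simp add: matrix_mult_sum scalar_mult_eq_scaleR)
  also have "\<dots> = (\<Sum>i\<in>UNIV. if i \<in> Z then x $ \<pi> i *\<^sub>R column i C else 0)"
    by (intro sum.cong) (auto simp: embed_def)
  also have "\<dots> = (\<Sum>i\<in>Z. x $ \<pi> i *\<^sub>R column i C)"
    by (simp add: sum.If_cases)
  finally show ?thesis by simp
qed

lemma restr_representer:
  assumes "invertible C'"
  shows "restr (C *v embed (matrix_inv C' *v b)) = b"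
  using matrix_inv_right[OF assms] by (simp add: restr_mult_embed matrix_vector_mul_assoc)

lemma stationary_iff_fixed_point:
  assumes inv: "invertible C" "invertible C'"
  shows "matrix_inv C *v u = embed (\<Phi> (restr u)) \<longleftrightarrow>
         (\<exists>b. matrix_inv C' *v b = \<Phi> b \<and> u = C *v embed (matrix_inv C' *v b))"
proof
  assume stat: "matrix_inv C *v u = embed (\<Phi> (restr u))"
  obtain b where b: "b = restr u" by simp
  have u: "u = C *v embed (\<Phi> b)"
    using arg_cong[OF stat, of "(*v) C"] matrix_inv_right[OF inv(1)] b
    by (simp add: matrix_vector_mul_assoc)
  hence "b = restr (C *v embed (\<Phi> b))" using b by metis
  hence "b = C' *v \<Phi> b" by (simp only: restr_mult_embed)
  hence "matrix_inv C' *v b = \<Phi> b"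
    using matrix_inv_left[OF inv(2)] by (metis matrix_vector_mul_assoc matrix_vector_mul_lid)
  thus "\<exists>b. matrix_inv C' *v b = \<Phi> b \<and> u = C *v embed (matrix_inv C' *v b)" using u by metis
next
  assume "\<exists>b. matrix_inv C' *v b = \<Phi> b \<and> u = C *v embed (matrix_inv C' *v b)"
  then obtain b where b: "matrix_inv C' *v b = \<Phi> b" and u: "u = C *v embed (matrix_inv C' *v b)"
    by blast
  have "restr u = b" using restr_representer[OF inv(2)] by (simp add: u)
  thus "matrix_inv C *v u = embed (\<Phi> (restr u))"
    using matrix_inv_left[OF inv(1)] by (simp add: u b matrix_vector_mul_assoc)
qed

end

theorem corollary2p6:
  fixes W :: "real^'n^'n"
    and p tau2 \<alpha> :: real
    and d :: "'n \<Rightarrow> real"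
    and D L C :: "real^'n^'n"
    and Z' :: "'n set"
    and y :: "'n \<Rightarrow> real"
    and \<pi> :: "'n \<Rightarrow> 'j::finite"
    and C' :: "real^'j^'j"
    and \<psi> \<Psi> :: "real \<Rightarrow> real"
    and F :: "'n \<Rightarrow> real \<Rightarrow> real"
    and F' :: "real^'j \<Rightarrow> real^'j"
    and JJ :: "real^'n \<Rightarrow> real"
    and JJ' :: "real^'j \<Rightarrow> real"
  assumes W_sym: "transpose W = W"
    and W_nonneg: "\<forall>i j. W $ i $ j \<ge> 0"
    and d_def: "\<forall>i. d i = (\<Sum>j\<in>UNIV. W $ i $ j)"
    and d_pos: "\<forall>i. d i > 0"
    and D_def: "D = diag_mat d"
    and L_def: "L = diag_mat (\<lambda>i. d i powr (- p)) ** (D - W) ** diag_mat (\<lambda>i. d i powr (- p))"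
    and tau2_pos: "tau2 > 0"
    and alpha_pos: "\<alpha> > 0"
    and C_def: "C = (tau2 powr \<alpha>) *\<^sub>R mat_powr (L + tau2 *\<^sub>R mat 1) (- \<alpha>)"
    and card_Z': "card Z' = CARD('j)"
    and y_vals: "\<forall>j\<in>Z'. y j \<in> {-1, 1}"
    and \<pi>_bij: "bij_betw \<pi> Z' (UNIV :: 'j set)"
    and C'_def: "\<forall>i\<in>Z'. \<forall>j\<in>Z'. C' $ \<pi> i $ \<pi> j = C $ i $ j"
    and \<psi>_deriv: "\<exists>\<psi>'. continuous_on UNIV \<psi>' \<and> (\<forall>x. (\<psi> has_real_derivative \<psi>' x) (at x))"
    and \<psi>_sym: "\<forall>x. \<psi> (- x) = \<psi> x"
    and \<psi>_pos: "\<forall>x. \<psi> x > 0"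
    and \<psi>_density: "(\<psi> has_integral 1) UNIV"
    and \<psi>_logconc: "strictly_concave_on UNIV (\<lambda>x. ln (\<psi> x))"
    and \<Psi>_def: "\<forall>x. \<Psi> x = integral {..x} \<psi>"
    and F_def: "\<forall>j s. F j s = y j * \<psi> (s * y j) / \<Psi> (s * y j)"
    and F'_def: "\<forall>v. F' v = (\<chi> k. F (inv_into Z' \<pi> k) (v $ k))"
    and JJ_def: "\<forall>u. JJ u = 1/2 * (u \<bullet> (matrix_inv C *v u)) - (\<Sum>j\<in>Z'. ln (\<Psi> (u $ j * y j)))"
    and JJ'_def: "\<forall>b. JJ' b = 1/2 * (b \<bullet> (matrix_inv C' *v b))
                     - (\<Sum>k\<in>UNIV. ln (\<Psi> (b $ k * y (inv_into Z' \<pi> k))))"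
  shows
    "(\<forall>u. (\<forall>v. JJ u \<le> JJ v) \<longleftrightarrow>
          (\<exists>b. matrix_inv C' *v b = F' b \<and>
               u = (\<Sum>j\<in>Z'. (matrix_inv C' *v b) $ \<pi> j *\<^sub>R column j C))) \<and>
     (\<forall>u b. (\<forall>v. JJ u \<le> JJ v) \<and> matrix_inv C' *v b = F' b \<longrightarrow>
          u = (\<Sum>j\<in>Z'. (matrix_inv C' *v b) $ \<pi> j *\<^sub>R column j C) \<and>
          (\<forall>k. b $ k = u $ inv_into Z' \<pi> k)) \<and>
     (\<forall>b. matrix_inv C' *v b = F' b \<longleftrightarrow> (\<forall>v. JJ' b \<le> JJ' v))"
proof -
  have C: "transpose C = C" "positive_definite C"
    using regularized_laplacian_power_symmetric_positive_definite[OF W_sym W_nonneg[rule_format]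
        d_def[rule_format] L_def[unfolded D_def] tau2_pos] tau2_pos
    by (simp_all add: C_def)
  interpret S: principal_submatrix C C' Z' \<pi>
    using \<pi>_bij C'_def by unfold_locales auto
  have inv: "invertible C" "invertible C'"
    using positive_definite_imp_invertible C(2) S.positive_definite[OF C(2)] by auto
  obtain \<psi>' where "\<forall>x. (\<psi> has_real_derivative \<psi>' x) (at x)" using \<psi>_deriv by blast
  hence "continuous_on UNIV \<psi>" by (metis DERIV_isCont continuous_at_imp_continuous_on)
  then interpret log_concave_density \<psi> \<Psi>
    using \<psi>_pos \<psi>_density \<Psi>_def strictly_concave_on_imp_concave_on[OF \<psi>_logconc]
    by unfold_locales (auto simp: integrable_on_def)
  interpret J: quadratic_separable_objective "matrix_inv C" Z' "\<lambda>j s. ln (\<Psi> (s * y j))" F JJ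
    using symmetric_matrix_inv[OF C(1) inv(1)] positive_definite_matrix_inv[OF C(2)]
      ln_cdf_scaled_has_derivative ln_cdf_scaled_tangent F_def JJ_def
    by unfold_locales simp_all
  interpret J': quadratic_separable_objective "matrix_inv C'" UNIV
      "\<lambda>k s. ln (\<Psi> (s * y (inv_into Z' \<pi> k)))" "\<lambda>k. F (inv_into Z' \<pi> k)" JJ'
    using symmetric_matrix_inv[OF S.symmetric[OF C(1)] inv(2)]
      positive_definite_matrix_inv[OF S.positive_definite[OF C(2)]]
      ln_cdf_scaled_has_derivative ln_cdf_scaled_tangent F_def JJ'_def
    by unfold_locales simp_all
  have min_J: "(\<forall>v. JJ u \<le> JJ v) \<longleftrightarrow> matrix_inv C *v u = S.embed (F' (S.restr u))" for u
    using J.min_iff_stationary S.embed_restr_map[of F u] F'_def by simp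
  have min_J': "(\<forall>v. JJ' b \<le> JJ' v) \<longleftrightarrow> matrix_inv C' *v b = F' b" for b
    using J'.min_iff_stationary F'_def by simp
  have min_J_iff_fixed_point: "(\<forall>v. JJ u \<le> JJ v) \<longleftrightarrow>
      (\<exists>b. matrix_inv C' *v b = F' b \<and> u = C *v S.embed (matrix_inv C' *v b))" for u
    using min_J S.stationary_iff_fixed_point[OF inv, of u F'] by blast
  have min_J_representer:
    "u = C *v S.embed (matrix_inv C' *v b) \<and> (\<forall>k. b $ k = u $ inv_into Z' \<pi> k)"
    if "\<forall>v. JJ u \<le> JJ v" and "matrix_inv C' *v b = F' b" for u b
  proof -
    have "u = C *v S.embed (matrix_inv C' *v b)"
      using that min_J_iff_fixed_point J.min_unique by blast
    thus ?thesis using S.restr_representer[OF inv(2)] by (simp add: S.restr_def vec_eq_iff)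
  qed
  show ?thesis
    unfolding S.sum_columns using min_J_iff_fixed_point min_J_representer min_J' by blast
qed
end
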